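(* Consider the influence-based model $X(t+1)=f_{\mathrm{IbM}}(X(t))$, $f_{\mathrm{IbM}}(X)=\operatorname{diag}(|X|\mathbf{1}_n)^{-1}XX$. Let $Q_{\mathrm{IbM}}$ be the set of matrices $PYP^{\top}\in\mathcal{S}^{+}_{\mathrm{rs\text{-}symm}}$ with $P$ a permutation matrix and $Y$ block diagonal with each diagonal block of the form $\operatorname{sign}(w)w^{\top}$, $w\in\mathbb{R}^m$, $|w|\succ\mathbf{0}_m$, $m\le n$. Then: (i) each element of $Q_{\mathrm{IbM}}$ of rank one is a locally stable fixed point of $f_{\mathrm{IbM}}$; (ii) for every $X(0)\in\mathcal{S}^{+}_{\mathrm{rs\text{-}symm}}$, the following are equivalent: (a) the solution $X(t)$ satisfies the non-vanishing appraisal condition $\liminf_{t\to\infty}\min_{i,j}|X_{ij}(t)|>0$; (b) there exists $t_0\ge0$ such that $G(X(t))$ satisfies social balance for all $t\ge t_0$; (c) there exists $X^*\in Q_{\mathrm{IbM}}$ of rank one such that $\lim_{t\to\infty}X(t)=X^*$.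
   Context: $|X|$ is entry-wise absolute value, $\mathbf{1}_n$ the all-ones vector, $\operatorname{sign}$ entry-wise sign, $\succ$ entry-wise strict inequality. $\mathcal{S}^{+}_{\mathrm{rs\text{-}symm}}=\{X\in\mathbb{R}^{n\times n}:\operatorname{sign}(X)=\operatorname{sign}(X)^{\top},\ X_{ii}>0\ \forall i,\ \exists\gamma\succ\mathbf{0}_n\text{ with }\operatorname{diag}(\gamma)X=(\operatorname{diag}(\gamma)X)^{\top}\}$. A fixed point $X^*$ of a map $f$ is locally stable if for every $\epsilon>0$ there is $\delta>0$ such that $\max_{i,j}|X_{ij}(0)-X^*_{ij}|<\delta$ implies $\max_{i,j}|X_{ij}(t)-X^*_{ij}|<\epsilon$ for all $t\ge0$, where $X(t+1)=f(X(t))$. $G(X)$ is the weighted digraph with adjacency matrix $X$; it satisfies social balance if $X_{ii}>0$ for all $i$ and $\operatorname{sign}(X_{ij})\operatorname{sign}(X_{jk})\operatorname{sign}(X_{ki})=1$ for all $i,j,k$. *)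

theory Defs
  imports "HOL-Analysis.Analysis"
begin

text \<open>n x n real matrices are rendered as real^'n^'n with 'n a finite type of agents;
a linear order on 'n is only used to say what "block diagonal" (consecutive blocks) means.\<close>

definition f_IbM :: "real^'n^'n \<Rightarrow> real^'n^'n" where
  "f_IbM X = (\<chi> i j. (\<Sum>k\<in>UNIV. X$i$k * X$k$j) / (\<Sum>k\<in>UNIV. \<bar>X$i$k\<bar>))"

definition traj :: "real^'n^'n \<Rightarrow> nat \<Rightarrow> real^'n^'n" where
  "traj X0 t = (f_IbM ^^ t) X0"

definition S_rs_symm :: "(real^'n^'n) set" where
  "S_rs_symm = {X. (\<forall>i j. sgn (X$i$j) = sgn (X$j$i)) \<and> (\<forall>i. X$i$i > 0) \<and>
     (\<exists>\<gamma>::real^'n. (\<forall>i. \<gamma>$i > 0) \<and> (\<forall>i j. \<gamma>$i * X$i$j = \<gamma>$j * X$j$i))}"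

definition permutation_matrix :: "real^'n^'n \<Rightarrow> bool" where
  "permutation_matrix P \<longleftrightarrow> (\<exists>p. p permutes (UNIV::'n set) \<and>
      P = (\<chi> i j. if i = p j then 1 else 0))"

text \<open>Y is block diagonal (consecutive blocks w.r.t. the order of 'n, block index b),
  each diagonal block being sign(w) w^T with all entries of w nonzero.\<close>
definition sign_block_diag :: "real^('n::{finite,linorder})^('n::{finite,linorder}) \<Rightarrow> bool" where
  "sign_block_diag Y \<longleftrightarrow> (\<exists>(b::'n::{finite,linorder} \<Rightarrow> nat) (w::real^('n::{finite,linorder})). mono b \<and> (\<forall>i. w$i \<noteq> 0) \<and>
      (\<forall>i j. Y$i$j = (if b i = b j then sgn (w$i) * (w$j) else 0)))"

definition Q_IbM :: "(real^('n::{finite,linorder})^('n::{finite,linorder})) set" where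
  "Q_IbM = {X. X \<in> S_rs_symm \<and>
     (\<exists>P Y. permutation_matrix P \<and> sign_block_diag Y \<and> X = P ** Y ** transpose P)}"

definition fixed_point :: "('a \<Rightarrow> 'a) \<Rightarrow> 'a \<Rightarrow> bool" where
  "fixed_point f x \<longleftrightarrow> f x = x"

definition locally_stable :: "(real^'n^'n \<Rightarrow> real^'n^'n) \<Rightarrow> real^'n^'n \<Rightarrow> bool" where
  "locally_stable f Xs \<longleftrightarrow> (\<forall>\<epsilon>>0. \<exists>\<delta>>0. \<forall>X0.
     (\<forall>i j. \<bar>X0$i$j - Xs$i$j\<bar> < \<delta>) \<longrightarrow>
     (\<forall>t. \<forall>i j. \<bar>((f ^^ t) X0)$i$j - Xs$i$j\<bar> < \<epsilon>))"

definition social_balance :: "real^'n^'n \<Rightarrow> bool" where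
  "social_balance X \<longleftrightarrow> (\<forall>i. X$i$i > 0) \<and>
     (\<forall>i j k. sgn (X$i$j) * sgn (X$j$k) * sgn (X$k$i) = 1)"

definition min_abs_entry :: "real^'n^'n \<Rightarrow> real" where
  "min_abs_entry X = Min {\<bar>X$i$j\<bar> | i j. True}"

end

theory Submission
  imports Defs
begin

(* Conjugating by a signature matrix D = diag(s), s(i) = \<plusminus>1, commutes with f_IbM and
  preserves absolute values. A matrix is socially balanced iff some such conjugate D X D is
  entrywise positive, and on positive matrices f_IbM is a row-stochastic averaging, which
  contracts every column to a consensus value. Hence a balanced trajectory converges to
  D (1 c^T) D, a rank-one element of Q_IbM, and these limits are stable fixed points.
  Conversely, the sum over columns of the largest absolute entry is nonincreasing along
  trajectories in S_rs_symm, and strictly decreases by a uniform amount whenever the trajectory is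
  unbalanced while its entries stay away from zero; so non-vanishing appraisals force
  eventual balance. *)

definition row_abs_sum :: "real^'n^'m \<Rightarrow> 'm \<Rightarrow> real" where
  "row_abs_sum X i = (\<Sum>k\<in>UNIV. \<bar>X$i$k\<bar>)"

lemma f_IbM_nth: "f_IbM X $ i $ j = (\<Sum>k\<in>UNIV. X$i$k * X$k$j) / row_abs_sum X i"
  by (simp add: f_IbM_def row_abs_sum_def)

lemma traj_Suc: "traj X0 (Suc t) = f_IbM (traj X0 t)"
  by (simp add: traj_def)

lemma traj_add: "traj X0 (t + k) = (f_IbM ^^ k) (traj X0 t)"
  by (simp add: traj_def funpow_add add.commute)

lemma abs_le_row_abs_sum: "\<bar>X$i$k\<bar> \<le> row_abs_sum X i"
  unfolding row_abs_sum_def by (rule member_le_sum) auto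

lemma abs_row_weights_sum:
  assumes "0 < row_abs_sum X i"
  shows "(\<Sum>k\<in>UNIV. \<bar>X$i$k\<bar> / row_abs_sum X i) = 1"
  using assms by (simp add: sum_divide_distrib[symmetric] row_abs_sum_def[symmetric])

lemma abs_f_IbM_le_weighted:
  assumes "0 < row_abs_sum X i"
  shows "\<bar>f_IbM X $ i $ j\<bar> \<le> (\<Sum>k\<in>UNIV. (\<bar>X$i$k\<bar> / row_abs_sum X i) * \<bar>X$k$j\<bar>)"
proof -
  have "\<bar>f_IbM X $ i $ j\<bar> = \<bar>\<Sum>k\<in>UNIV. X$i$k * X$k$j\<bar> / row_abs_sum X i"
    unfolding f_IbM_nth abs_divide using assms by simp
  also have "\<dots> \<le> (\<Sum>k\<in>UNIV. \<bar>X$i$k * X$k$j\<bar>) / row_abs_sum X i"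
    using assms by (intro divide_right_mono sum_abs) auto
  also have "\<dots> = (\<Sum>k\<in>UNIV. (\<bar>X$i$k\<bar> / row_abs_sum X i) * \<bar>X$k$j\<bar>)"
    unfolding sum_divide_distrib by (simp add: abs_mult)
  finally show ?thesis .
qed

lemma convex_comb_le_gap:
  fixes w x :: "'a \<Rightarrow> real"
  assumes "finite A" "\<forall>l\<in>A. 0 \<le> w l" "sum w A = 1" "\<forall>l\<in>A. x l \<le> h"
    and "i \<in> A" "x i \<le> h - \<eta>" "e \<le> w i" "0 \<le> \<eta>"
  shows "(\<Sum>l\<in>A. w l * x l) \<le> h - e * \<eta>"
proof -
  have "(\<Sum>l\<in>A. w l * x l) = h + (\<Sum>l\<in>A. w l * (x l - h))"
    using assms(3) by (simp add: right_diff_distrib sum_subtractf sum_distrib_right[symmetric])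
  also have "(\<Sum>l\<in>A. w l * (x l - h)) = w i * (x i - h) + (\<Sum>l\<in>A-{i}. w l * (x l - h))"
    using assms(1,5) by (simp add: sum.remove)
  also have "(\<Sum>l\<in>A-{i}. w l * (x l - h)) \<le> 0"
    using assms(2,4) by (intro sum_nonpos) (simp add: mult_nonneg_nonpos)
  also have "w i * (x i - h) \<le> w i * (- \<eta>)"
    using assms by (intro mult_left_mono) auto
  also have "w i * (- \<eta>) \<le> e * (- \<eta>)"
    using assms by (intro mult_right_mono_neg) auto
  finally show ?thesis by simp
qed

lemma convex_comb_le:
  fixes w x :: "'a \<Rightarrow> real"
  assumes "finite A" "A \<noteq> {}" "\<forall>l\<in>A. 0 \<le> w l" "sum w A = 1" "\<forall>l\<in>A. x l \<le> h"
  shows "(\<Sum>l\<in>A. w l * x l) \<le> h"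
proof -
  obtain i where "i \<in> A" using assms(2) by blast
  then show ?thesis
    using convex_comb_le_gap[OF assms(1,3-5), of i 0 0] assms(3,5) by simp
qed

lemma convex_comb_ge:
  fixes w x :: "'a \<Rightarrow> real"
  assumes "finite A" "A \<noteq> {}" "\<forall>l\<in>A. 0 \<le> w l" "sum w A = 1" "\<forall>l\<in>A. h \<le> x l"
  shows "h \<le> (\<Sum>l\<in>A. w l * x l)"
  using convex_comb_le[OF assms(1-4), of "\<lambda>l. - x l" "- h"] assms(5) by (simp add: sum_negf)

subsection \<open>Signature conjugation\<close>

definition sign_conj :: "('n \<Rightarrow> real) \<Rightarrow> real^'n^'n \<Rightarrow> real^'n^'n" where
  "sign_conj s X = (\<chi> i j. s i * s j * X$i$j)"

lemma sign_conj_nth [simp]: "sign_conj s X $ i $ j = s i * s j * X$i$j"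
  by (simp add: sign_conj_def)

lemma mult_self_eq_1_if_abs_1: "\<bar>s\<bar> = (1::real) \<Longrightarrow> s * s = 1"
  by (metis abs_mult_self_eq mult.right_neutral)

lemma sgn_eq_self_if_abs_1: "\<bar>s\<bar> = (1::real) \<Longrightarrow> sgn s = s"
  by (auto simp: sgn_real_def abs_if split: if_splits)

lemma abs_sign_conj_nth:
  "\<forall>i. \<bar>s i\<bar> = 1 \<Longrightarrow> \<bar>sign_conj s X $ i $ j\<bar> = \<bar>X$i$j\<bar>"
  by (simp add: abs_mult)

lemma sign_conj_sign_conj:
  assumes "\<forall>i. \<bar>s i\<bar> = 1"
  shows "sign_conj s (sign_conj s X) = X"
proof -
  have "s i * s j * (s i * s j * X$i$j) = (s i * s i) * (s j * s j) * X$i$j" for i j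
    by (simp add: algebra_simps)
  then show ?thesis
    using assms by (simp add: vec_eq_iff mult_self_eq_1_if_abs_1)
qed

lemma row_abs_sum_sign_conj:
  "\<forall>i. \<bar>s i\<bar> = 1 \<Longrightarrow> row_abs_sum (sign_conj s X) i = row_abs_sum X i"
  by (simp add: row_abs_sum_def abs_mult)

lemma f_IbM_sign_conj:
  assumes s: "\<forall>i. \<bar>s i\<bar> = 1"
  shows "f_IbM (sign_conj s X) = sign_conj s (f_IbM X)"
proof -
  have term_eq: "(s i * s k * X$i$k) * (s k * s j * X$k$j) = s i * s j * (X$i$k * X$k$j)" for i j k
  proof -
    have "(s i * s k * X$i$k) * (s k * s j * X$k$j) = s i * s j * (X$i$k * X$k$j) * (s k * s k)"
      by (simp add: algebra_simps)
    then show ?thesis using s by (simp add: mult_self_eq_1_if_abs_1)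
  qed
  then have "(\<Sum>k\<in>UNIV. (s i * s k * X$i$k) * (s k * s j * X$k$j)) =
      s i * s j * (\<Sum>k\<in>UNIV. X$i$k * X$k$j)" for i j
    unfolding term_eq by (simp add: sum_distrib_left)
  then show ?thesis
    using s by (simp add: vec_eq_iff f_IbM_nth row_abs_sum_sign_conj)
qed

lemma funpow_f_IbM_sign_conj:
  "\<forall>i. \<bar>s i\<bar> = 1 \<Longrightarrow> (f_IbM ^^ t) (sign_conj s X) = sign_conj s ((f_IbM ^^ t) X)"
  by (induction t) (simp_all add: f_IbM_sign_conj)

subsection \<open>Positive matrices: consensus\<close>

definition positive_matrix :: "real^'n^'m \<Rightarrow> bool" where
  "positive_matrix Y \<longleftrightarrow> (\<forall>i j. 0 < Y$i$j)"

definition col_min :: "real^'n^'m \<Rightarrow> 'n \<Rightarrow> real" where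
  "col_min Y j = Min (range (\<lambda>k. Y$k$j))"

definition col_max :: "real^'n^'m \<Rightarrow> 'n \<Rightarrow> real" where
  "col_max Y j = Max (range (\<lambda>k. Y$k$j))"

lemma col_min_le: "col_min Y j \<le> Y$k$j"
  unfolding col_min_def by (rule Min_le) auto

lemma le_col_max: "Y$k$j \<le> col_max Y j"
  unfolding col_max_def by (rule Max_ge) auto

lemma col_min_attained: "\<exists>k. Y$k$j = col_min Y j"
proof -
  have "col_min Y j \<in> range (\<lambda>k. Y$k$j)" unfolding col_min_def by (rule Min_in) auto
  then show ?thesis by auto
qed

lemma col_max_attained: "\<exists>k. Y$k$j = col_max Y j"
proof -
  have "col_max Y j \<in> range (\<lambda>k. Y$k$j)" unfolding col_max_def by (rule Max_in) auto
  then show ?thesis by auto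
qed

lemma col_min_greatest: "(\<And>k. a \<le> Y$k$j) \<Longrightarrow> a \<le> col_min Y j"
  using col_min_attained by metis

lemma col_max_least: "(\<And>k. Y$k$j \<le> a) \<Longrightarrow> col_max Y j \<le> a"
  using col_max_attained by metis

lemma col_min_le_col_max: "col_min Y j \<le> col_max Y j"
  using col_min_le[of Y j undefined] le_col_max[of Y undefined j] by linarith

lemma positive_matrix_col_min: "positive_matrix Y \<Longrightarrow> 0 < col_min Y j"
  using col_min_attained[of Y j] unfolding positive_matrix_def by metis

lemma row_abs_sum_positive:
  assumes "positive_matrix Y"
  shows "row_abs_sum Y i = (\<Sum>k\<in>UNIV. Y$i$k)" and "0 < row_abs_sum Y i"
proof -
  show eq: "row_abs_sum Y i = (\<Sum>k\<in>UNIV. Y$i$k)"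
    using assms unfolding row_abs_sum_def positive_matrix_def by (simp add: less_imp_le)
  show "0 < row_abs_sum Y i"
    using assms unfolding eq positive_matrix_def by (simp add: sum_pos)
qed

lemma f_IbM_positive_avg:
  assumes "positive_matrix Y"
  shows "f_IbM Y $ i $ j = (\<Sum>k\<in>UNIV. (Y$i$k / row_abs_sum Y i) * Y$k$j)"
    and "\<forall>k\<in>UNIV. 0 \<le> Y$i$k / row_abs_sum Y i"
    and "(\<Sum>k\<in>UNIV. Y$i$k / row_abs_sum Y i) = 1"
proof -
  show "f_IbM Y $ i $ j = (\<Sum>k\<in>UNIV. (Y$i$k / row_abs_sum Y i) * Y$k$j)"
    by (simp add: f_IbM_nth sum_divide_distrib)
  show "\<forall>k\<in>UNIV. 0 \<le> Y$i$k / row_abs_sum Y i"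
    using assms row_abs_sum_positive(2)[OF assms, of i]
    unfolding positive_matrix_def by (simp add: less_imp_le)
  show "(\<Sum>k\<in>UNIV. Y$i$k / row_abs_sum Y i) = 1"
    using row_abs_sum_positive[OF assms, of i] by (simp add: sum_divide_distrib[symmetric])
qed

lemma positive_matrix_f_IbM:
  assumes "positive_matrix Y"
  shows "positive_matrix (f_IbM Y)"
  unfolding positive_matrix_def f_IbM_nth
  using assms row_abs_sum_positive(2)[OF assms] unfolding positive_matrix_def
  by (auto intro!: divide_pos_pos sum_pos)

lemma positive_matrix_funpow_f_IbM: "positive_matrix Y \<Longrightarrow> positive_matrix ((f_IbM ^^ t) Y)"
  by (induction t) (auto intro: positive_matrix_f_IbM)

lemma f_IbM_col_bounds:
  assumes "positive_matrix Y" "\<forall>k. lo \<le> Y$k$j \<and> Y$k$j \<le> hi"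
  shows "lo \<le> f_IbM Y $i$j \<and> f_IbM Y $i$j \<le> hi"
  unfolding f_IbM_positive_avg(1)[OF assms(1)] using assms(2) f_IbM_positive_avg(2,3)[OF assms(1)]
  by (intro conjI convex_comb_le convex_comb_ge) auto

lemma funpow_f_IbM_col_bounds:
  assumes "positive_matrix Y" "\<forall>k. lo \<le> Y$k$j \<and> Y$k$j \<le> hi"
  shows "lo \<le> (f_IbM ^^ t) Y $k$j \<and> (f_IbM ^^ t) Y $k$j \<le> hi"
proof (induction t arbitrary: k)
  case (Suc t)
  then show ?case
    using f_IbM_col_bounds[OF positive_matrix_funpow_f_IbM[OF assms(1)], of lo t j hi k] by simp
qed (use assms in simp)

lemma funpow_f_IbM_col_min_max:
  "positive_matrix Y \<Longrightarrow> col_min Y j \<le> (f_IbM ^^ t) Y $k$j \<and> (f_IbM ^^ t) Y $k$j \<le> col_max Y j"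
  by (rule funpow_f_IbM_col_bounds) (auto simp: col_min_le le_col_max)

lemma f_IbM_col_contract:
  assumes "positive_matrix Y" "\<forall>i k. e \<le> Y$i$k / row_abs_sum Y i"
  shows "col_max (f_IbM Y) j \<le> col_max Y j - e * (col_max Y j - col_min Y j)"
    and "col_min Y j \<le> col_min (f_IbM Y) j"
proof -
  obtain k0 where k0: "Y$k0$j = col_min Y j" using col_min_attained by metis
  show "col_max (f_IbM Y) j \<le> col_max Y j - e * (col_max Y j - col_min Y j)"
  proof (rule col_max_least)
    fix i
    show "f_IbM Y $ i $ j \<le> col_max Y j - e * (col_max Y j - col_min Y j)"
      unfolding f_IbM_positive_avg(1)[OF assms(1)]
      by (rule convex_comb_le_gap[OF _ f_IbM_positive_avg(2,3)[OF assms(1)], where i=k0])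
        (use k0 assms(2) in \<open>auto simp: le_col_max col_min_le_col_max\<close>)
  qed
  show "col_min Y j \<le> col_min (f_IbM Y) j"
    using f_IbM_col_bounds[OF assms(1), of "col_min Y j" j "col_max Y j"]
    by (intro col_min_greatest) (auto simp: col_min_le le_col_max)
qed

text \<open>Along the orbit of a positive matrix the columns stay within their initial ranges, so
  every entry is at least the smallest initial entry and every row sum at most the sum of the
  initial column maxima: the averaging weights are uniformly bounded below.\<close>

lemma funpow_f_IbM_weights_lower_bound:
  assumes Y: "positive_matrix Y"
  obtains e where "0 < e" "e \<le> 1"
    "\<And>t i k. e \<le> (f_IbM ^^ t) Y $i$k / row_abs_sum ((f_IbM ^^ t) Y) i"
proof
  define m where "m = Min (range (col_min Y))"
  define B where "B = (\<Sum>j\<in>UNIV. col_max Y j)"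
  have m_pos: "0 < m"
    unfolding m_def using positive_matrix_col_min[OF Y] by (subst Min_gr_iff) auto
  have m_le: "m \<le> (f_IbM ^^ t) Y $i$k" for t i k
  proof -
    have "m \<le> col_min Y k" unfolding m_def by (rule Min_le) auto
    then show ?thesis using funpow_f_IbM_col_min_max[OF Y, of k t i] by linarith
  qed
  have row_le: "row_abs_sum ((f_IbM ^^ t) Y) i \<le> B" for t i
    unfolding row_abs_sum_positive(1)[OF positive_matrix_funpow_f_IbM[OF Y]] B_def
    by (intro sum_mono) (use funpow_f_IbM_col_min_max[OF Y] in auto)
  show weight: "m / B \<le> (f_IbM ^^ t) Y $i$k / row_abs_sum ((f_IbM ^^ t) Y) i" for t i k
    using m_le m_pos row_le row_abs_sum_positive(2)[OF positive_matrix_funpow_f_IbM[OF Y]]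
    by (intro frac_le) (auto intro: order_trans[OF less_imp_le[OF m_pos]])
  show "0 < m / B"
    using m_pos row_le[of 0 undefined] row_abs_sum_positive(2)[OF Y, of undefined] by simp
  have "Y$i$i / row_abs_sum Y i \<le> 1" for i
    using abs_le_row_abs_sum[of Y i i] row_abs_sum_positive(2)[OF Y, of i] by simp
  then show "m / B \<le> 1"
    using weight[of 0 undefined undefined] by (metis funpow_0 order_trans)
qed

lemma funpow_f_IbM_col_spread:
  assumes Y: "positive_matrix Y" and e: "e \<le> 1"
    and weights: "\<And>t. \<forall>i k. e \<le> (f_IbM ^^ t) Y $i$k / row_abs_sum ((f_IbM ^^ t) Y) i"
  shows "col_max ((f_IbM ^^ t) Y) j - col_min ((f_IbM ^^ t) Y) j
    \<le> (1 - e)^t * (col_max Y j - col_min Y j)"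
proof (induction t)
  case (Suc t)
  have "col_max ((f_IbM ^^ Suc t) Y) j - col_min ((f_IbM ^^ Suc t) Y) j
      \<le> (1 - e) * (col_max ((f_IbM ^^ t) Y) j - col_min ((f_IbM ^^ t) Y) j)"
    using f_IbM_col_contract[OF positive_matrix_funpow_f_IbM[OF Y] weights, of t j]
    by (simp add: algebra_simps)
  also have "\<dots> \<le> (1 - e) * ((1 - e)^t * (col_max Y j - col_min Y j))"
    using Suc e by (intro mult_left_mono) auto
  finally show ?case
    by (simp add: mult.assoc)
qed simp

lemma positive_consensus:
  assumes Y: "positive_matrix Y"
  obtains c where "\<forall>j. 0 < c j" "(\<lambda>t. (f_IbM ^^ t) Y) \<longlonglongrightarrow> (\<chi> i j. c j)"
proof -
  define Ys where "Ys t = (f_IbM ^^ t) Y" for t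
  have Ys_pos: "positive_matrix (Ys t)" for t
    unfolding Ys_def by (rule positive_matrix_funpow_f_IbM[OF Y])
  obtain e where e: "0 < e" "e \<le> 1" "\<And>t. \<forall>i k. e \<le> Ys t $i$k / row_abs_sum (Ys t) i"
    using funpow_f_IbM_weights_lower_bound[OF Y] unfolding Ys_def by metis
  define c where "c j = (SUP t. col_min (Ys t) j)" for j
  have "(\<lambda>t. Ys t $ k $ j) \<longlonglongrightarrow> c j \<and> 0 < c j" for k j
  proof -
    define lo where "lo t = col_min (Ys t) j" for t
    define R where "R t = col_max (Ys t) j - col_min (Ys t) j" for t
    have "incseq lo"
      by (rule incseq_SucI) (use f_IbM_col_contract(2)[OF Ys_pos e(3)] in
          \<open>simp add: lo_def Ys_def\<close>)
    moreover have "lo t \<le> col_max Y j" for t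
      using funpow_f_IbM_col_min_max[OF Y, of j t j] col_min_le[of "Ys t" j j]
      unfolding lo_def Ys_def by linarith
    ultimately have lo_lim: "lo \<longlonglongrightarrow> c j"
      unfolding c_def lo_def[symmetric] by (intro LIMSEQ_incseq_SUP bdd_aboveI) auto
    have "(\<lambda>t. (1 - e)^t * R 0) \<longlonglongrightarrow> 0"
      using e(1,2) by (intro tendsto_mult_left_zero LIMSEQ_power_zero) auto
    moreover have "0 \<le> R t" "R t \<le> (1 - e)^t * R 0" for t
      using col_min_le_col_max[of "Ys t" j] funpow_f_IbM_col_spread[OF Y e(2) e(3)[unfolded Ys_def]]
      unfolding R_def Ys_def by auto
    ultimately have "R \<longlonglongrightarrow> 0"
      by (intro tendsto_sandwich[of "\<lambda>_. 0" R sequentially _ 0]) auto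
    then have "(\<lambda>t. lo t + R t) \<longlonglongrightarrow> c j"
      using tendsto_add[OF lo_lim] by fastforce
    with lo_lim have "(\<lambda>t. Ys t $ k $ j) \<longlonglongrightarrow> c j"
      by (rule tendsto_sandwich[rotated 2]) (simp_all add: lo_def R_def col_min_le le_col_max)
    moreover have "0 < c j"
      using positive_matrix_col_min[OF Ys_pos, of 0 j] incseq_le[OF \<open>incseq lo\<close> lo_lim, of 0]
      unfolding lo_def by linarith
    ultimately show ?thesis ..
  qed
  then have "\<forall>j. 0 < c j" "Ys \<longlonglongrightarrow> (\<chi> i j. c j)"
    by (auto intro!: vec_tendstoI)
  then show ?thesis using that unfolding Ys_def by blast
qed

subsection \<open>Social balance\<close>

lemma social_balance_sign_conj_positive:
  assumes s: "\<forall>i. \<bar>s i\<bar> = 1" and Y: "positive_matrix Y"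
  shows "social_balance (sign_conj s Y)"
proof -
  have sq: "s i * s i = 1" for i
    using s by (simp add: mult_self_eq_1_if_abs_1)
  have sgn_eq: "sgn (sign_conj s Y $ i $ j) = s i * s j" for i j
    using s Y unfolding positive_matrix_def by (simp add: sgn_mult sgn_eq_self_if_abs_1)
  have "(s i * s j) * (s j * s k) * (s k * s i) = (s i * s i) * (s j * s j) * (s k * s k)" for i j k
    by (simp add: algebra_simps)
  then show ?thesis
    using Y sq unfolding social_balance_def sgn_eq positive_matrix_def by simp
qed

lemma social_balance_obtain_sign_conj:
  assumes "social_balance X"
  obtains s where "\<forall>i. \<bar>s i\<bar> = 1" "positive_matrix (sign_conj s X)"
proof
  have diag: "0 < X$i$i" and tri: "sgn (X$i$j) * sgn (X$j$k) * sgn (X$k$i) = 1" for i j k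
    using assms unfolding social_balance_def by blast+
  fix a :: 'a
  define s where "s i = sgn (X$a$i)" for i
  have nz: "X$i$j \<noteq> 0" for i j
    using tri[of i j i] by auto
  show "\<forall>i. \<bar>s i\<bar> = 1"
    using nz unfolding s_def by (simp add: abs_sgn_eq)
  have "sgn (X$j$a) = sgn (X$a$j)" for j
    using tri[of a j a] diag[of a] by (auto simp: sgn_real_def split: if_splits)
  then have "sgn (X$i$j) = s i * s j" for i j
    using tri[of a i j] unfolding s_def by (auto simp: sgn_real_def split: if_splits)
  then have "s i * s j * X$i$j = \<bar>X$i$j\<bar>" for i j
    by (metis sgn_mult_abs abs_sgn mult.commute)
  then show "positive_matrix (sign_conj s X)"
    using nz unfolding positive_matrix_def by simp
qed

lemma social_balance_f_IbM:
  assumes "social_balance X"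
  shows "social_balance (f_IbM X)"
proof -
  obtain s where s: "\<forall>i. \<bar>s i\<bar> = 1" "positive_matrix (sign_conj s X)"
    using social_balance_obtain_sign_conj[OF assms] .
  have "f_IbM X = sign_conj s (f_IbM (sign_conj s X))"
    by (metis f_IbM_sign_conj s(1) sign_conj_sign_conj)
  then show ?thesis
    using social_balance_sign_conj_positive[OF s(1) positive_matrix_f_IbM[OF s(2)]] by simp
qed

lemma social_balance_if_sgn_eq:
  assumes "\<forall>i j. sgn (X$i$j) = sgn (Y$i$j)" "social_balance Y"
  shows "social_balance X"
  using assms unfolding social_balance_def by (metis sgn_greater)

lemma rank_eq_1_if_outer:
  fixes A :: "real^'n^'m"
  assumes "\<forall>i j. A$i$j = u i * v$j" "A \<noteq> 0"
  shows "rank A = 1"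
proof -
  have "rows A \<subseteq> span {v}"
  proof
    fix r assume "r \<in> rows A"
    then obtain i where "r = row i A" unfolding rows_def by auto
    then have "r = u i *\<^sub>R v" using assms(1) by (simp add: vec_eq_iff row_def)
    then show "r \<in> span {v}" by (simp add: span_base span_scale)
  qed
  then have "rank A \<le> 1" unfolding row_rank_def using dim_le_card[of "rows A" "{v}"] by simp
  moreover have "rank A \<noteq> 0" using assms(2) by (simp add: rank_eq_0)
  ultimately show ?thesis by simp
qed

lemma rank_1_obtain_outer:
  fixes A :: "real^'n^'m"
  assumes "rank A = 1"
  obtains u v where "\<forall>i j. A$i$j = u i * v$j"
proof -
  obtain B where B: "B \<subseteq> rows A" "independent B" "rows A \<subseteq> span B" "card B = dim (rows A)"
    by (rule basis_exists)
  then have "card B = 1" using assms by (simp add: row_rank_def)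
  then obtain v where "B = {v}" by (metis One_nat_def card_1_singleton_iff)
  then have "row i A \<in> span {v}" for i
    using B(3) unfolding rows_def by auto
  then have "\<forall>i. \<exists>k. row i A = k *\<^sub>R v"
    unfolding real_vector.span_singleton by auto
  then obtain u where u: "\<forall>i. row i A = u i *\<^sub>R v" by metis
  have "A$i$j = u i * v$j" for i j
    using u[rule_format, of i] by (simp add: vec_eq_iff row_def)
  then show ?thesis using that by blast
qed

lemma permutation_conj_nth:
  assumes "permutation_matrix (P :: real^'n^'n)"
  obtains q where "\<forall>i j. (P ** M ** transpose P)$i$j = M$(q i)$(q j)"
proof -
  obtain p where p: "p permutes (UNIV::'n set)" "P = (\<chi> i j. if i = p j then 1 else 0)"
    using assms unfolding permutation_matrix_def by blast
  have eq: "(i = p k) \<longleftrightarrow> (k = inv p i)" for i k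
    using permutes_inverses[OF p(1)] by metis
  have "(P ** N)$i$j = (\<Sum>k\<in>UNIV. if k = inv p i then N$k$j else 0)" for N :: "real^'n^'n" and i j
    unfolding matrix_matrix_mult_def p(2) by (simp only: vec_lambda_beta, intro sum.cong) (auto simp: eq)
  moreover have "(N ** transpose P)$i$j = (\<Sum>k\<in>UNIV. if k = inv p j then N$i$k else 0)"
    for N :: "real^'n^'n" and i j
    unfolding matrix_matrix_mult_def p(2) transpose_def by (simp only: vec_lambda_beta, intro sum.cong) (auto simp: eq)
  ultimately show ?thesis
    using that[of "inv p"] by simp
qed

lemma sign_conj_consensus_in_Q_IbM:
  fixes s c :: "'n::{finite,linorder} \<Rightarrow> real"
  assumes s: "\<forall>i. \<bar>s i\<bar> = 1" and c: "\<forall>j. 0 < c j"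
  shows "sign_conj s (\<chi> i j. c j) \<in> Q_IbM" and "rank (sign_conj s (\<chi> i j. c j)) = 1"
proof -
  define Xs where "Xs = sign_conj s (\<chi> i j. c j)"
  define w where "w = (\<chi> j. s j * c j)"
  have sq: "s i * s i = 1" for i
    using s by (simp add: mult_self_eq_1_if_abs_1)
  have Xs_nth: "Xs$i$j = sgn (w$i) * w$j" for i j
    using s c unfolding Xs_def w_def by (simp add: sgn_mult sgn_eq_self_if_abs_1)
  have "Xs \<in> S_rs_symm"
    unfolding S_rs_symm_def
  proof (intro CollectI conjI allI exI)
    show "sgn (Xs$i$j) = sgn (Xs$j$i)" for i j
      using s c unfolding Xs_def by (simp add: sgn_mult mult.commute)
    show "0 < Xs$i$i" for i
      using sq[of i] c unfolding Xs_def by simp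
    show "0 < (\<chi> i. c i) $ i" for i
      using c by simp
    show "(\<chi> i. c i) $ i * Xs$i$j = (\<chi> i. c i) $ j * Xs$j$i" for i j
      unfolding Xs_def by (simp add: algebra_simps)
  qed
  moreover have "permutation_matrix (mat 1 :: real^('n::{finite,linorder})^('n::{finite,linorder}))"
    unfolding permutation_matrix_def by (intro exI[of _ id]) (simp add: permutes_id mat_def)
  moreover have "w$i \<noteq> 0" for i
    using s[rule_format, of i] c[rule_format, of i] unfolding w_def by auto
  then have "sign_block_diag Xs"
    unfolding sign_block_diag_def using Xs_nth
    by (intro exI[of _ "\<lambda>_. 0"] exI[of _ w]) (simp add: mono_def)
  moreover have "Xs = mat 1 ** Xs ** transpose (mat 1)"
    by (simp add: transpose_mat)
  ultimately show "sign_conj s (\<chi> i j. c j) \<in> Q_IbM"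
    unfolding Q_IbM_def Xs_def[symmetric] by blast
  have "Xs $ i $ i \<noteq> 0" for i
    using sq[of i] c[rule_format, of i] unfolding Xs_def by simp
  then have "Xs \<noteq> 0"
    by (metis zero_index)
  then show "rank (sign_conj s (\<chi> i j. c j)) = 1"
    unfolding Xs_def[symmetric] by (intro rank_eq_1_if_outer[of _ s w]) (simp_all add: Xs_def w_def)
qed

lemma rank_1_Q_IbM_obtain_sign_conj:
  fixes Xs :: "real^('n::{finite,linorder})^('n::{finite,linorder})"
  assumes "Xs \<in> Q_IbM" "rank Xs = 1"
  obtains \<sigma> c where "\<forall>i. \<bar>\<sigma> i\<bar> = 1" "\<forall>j. 0 < c j" "Xs = sign_conj \<sigma> (\<chi> i j. c j)"
proof -
  obtain u v where uv: "\<forall>i j. Xs$i$j = u i * v$j"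
    using rank_1_obtain_outer[OF assms(2)] .
  obtain P Y where S: "Xs \<in> S_rs_symm"
    and PY: "permutation_matrix P" "sign_block_diag Y" "Xs = P ** Y ** transpose P"
    using assms(1) unfolding Q_IbM_def by blast
  obtain q where q: "\<forall>i j. Xs$i$j = Y$(q i)$(q j)"
    using permutation_conj_nth[OF PY(1), of Y] PY(3) by metis
  obtain b :: "'n \<Rightarrow> nat" and w where w: "\<forall>i. w$i \<noteq> 0"
    and Y: "\<forall>i j. Y$i$j = (if b i = b j then sgn (w$i) * (w$j) else 0)"
    using PY(2) unfolding sign_block_diag_def by blast
  have "0 < Xs$i$i" for i
    using S unfolding S_rs_symm_def by blast
  then have "u i \<noteq> 0" "v$i \<noteq> 0" for i
    using uv by (metis less_irrefl mult_zero_left mult_zero_right)+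
  then have nz: "Xs$i$j \<noteq> 0" for i j
    using uv by simp
  have "Xs$i$j = sgn (w$(q i)) * w$(q j)" for i j
    using nz[of i j] q Y by (auto split: if_splits)
  then have "Xs = sign_conj (\<lambda>i. sgn (w$(q i))) (\<chi> i j. \<bar>w$(q j)\<bar>)"
    by (simp add: vec_eq_iff mult.assoc sgn_mult_abs)
  moreover have "\<forall>i. \<bar>sgn (w$(q i))\<bar> = 1" "\<forall>j. 0 < \<bar>w$(q j)\<bar>"
    using w by (simp_all add: abs_sgn_eq)
  ultimately show ?thesis
    using that[of "\<lambda>i. sgn (w$(q i))" "\<lambda>j. \<bar>w$(q j)\<bar>"] by blast
qed

lemma f_IbM_consensus:
  assumes "\<forall>j. 0 < c j"
  shows "f_IbM (\<chi> i j. c j) = (\<chi> i j. c j)"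
proof -
  have "(\<Sum>k\<in>UNIV. \<bar>c k\<bar>) = (\<Sum>k\<in>UNIV. c k)" "0 < (\<Sum>k\<in>UNIV. c k)"
    using assms by (auto intro: sum_pos sum.cong simp: less_imp_le)
  then show ?thesis
    by (simp add: vec_eq_iff f_IbM_nth row_abs_sum_def sum_distrib_right[symmetric])
qed

lemma consensus_locally_stable:
  assumes c: "\<forall>j. 0 < c j"
  shows "locally_stable f_IbM (\<chi> i j. c j)"
  unfolding locally_stable_def
proof (intro allI impI)
  fix \<epsilon> :: real
  assume "0 < \<epsilon>"
  define \<delta> where "\<delta> = min \<epsilon> (Min (range c))"
  have \<delta>: "0 < \<delta>" "\<delta> \<le> \<epsilon>" "\<And>j. \<delta> \<le> c j"
    using \<open>0 < \<epsilon>\<close> c unfolding \<delta>_def by (auto simp: Min_gr_iff min.coboundedI2)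
  have "\<bar>(f_IbM ^^ t) Y0 $ i $ j - c j\<bar> < \<epsilon>"
    if Y0: "\<forall>i j. \<bar>Y0 $ i $ j - c j\<bar> < \<delta>" for Y0 t i j
  proof -
    have "positive_matrix Y0"
      unfolding positive_matrix_def using Y0 \<delta>(3) by (smt (verit))
    moreover have "c j - \<delta> < col_min Y0 j" "col_max Y0 j < c j + \<delta>"
      using col_min_attained[of Y0 j] col_max_attained[of Y0 j] Y0 by (metis abs_diff_less_iff)+
    ultimately show ?thesis
      using funpow_f_IbM_col_min_max[of Y0 j t i] \<delta>(2) by (simp add: abs_diff_less_iff)
  qed
  with \<delta> show "\<exists>\<delta>>0. \<forall>Y0. (\<forall>i j. \<bar>Y0 $ i $ j - (\<chi> i j. c j) $ i $ j\<bar> < \<delta>) \<longrightarrow>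
      (\<forall>t i j. \<bar>(f_IbM ^^ t) Y0 $ i $ j - (\<chi> i j. c j) $ i $ j\<bar> < \<epsilon>)"
    by auto
qed

lemma abs_sign_conj_diff:
  assumes "\<forall>i. \<bar>s i\<bar> = 1"
  shows "\<bar>sign_conj s A $ i $ j - B $ i $ j\<bar> = \<bar>A $ i $ j - sign_conj s B $ i $ j\<bar>"
proof -
  have "sign_conj s A $ i $ j - B $ i $ j = s i * s j * (A $ i $ j - sign_conj s B $ i $ j)"
    using assms by (simp add: algebra_simps mult_self_eq_1_if_abs_1)
  then show ?thesis
    using assms by (simp add: abs_mult)
qed

lemma locally_stable_sign_conj:
  assumes s: "\<forall>i. \<bar>s i\<bar> = 1" and "locally_stable f_IbM X"
  shows "locally_stable f_IbM (sign_conj s X)"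
  unfolding locally_stable_def
proof (intro allI impI)
  fix \<epsilon> :: real
  assume "0 < \<epsilon>"
  then obtain \<delta> where "0 < \<delta>" and \<delta>: "\<And>Y0. \<forall>i j. \<bar>Y0 $ i $ j - X $ i $ j\<bar> < \<delta> \<Longrightarrow>
      \<forall>t i j. \<bar>(f_IbM ^^ t) Y0 $ i $ j - X $ i $ j\<bar> < \<epsilon>"
    using assms(2) unfolding locally_stable_def by blast
  have "\<bar>(f_IbM ^^ t) X0 $ i $ j - sign_conj s X $ i $ j\<bar> < \<epsilon>"
    if "\<forall>i j. \<bar>X0 $ i $ j - sign_conj s X $ i $ j\<bar> < \<delta>" for X0 t i j
  proof -
    have "\<bar>sign_conj s X0 $ i $ j - X $ i $ j\<bar> < \<delta>" for i j
      using that abs_sign_conj_diff[OF s, where A=X0 and B=X] by simp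
    then have "\<bar>(f_IbM ^^ t) (sign_conj s X0) $ i $ j - X $ i $ j\<bar> < \<epsilon>"
      using \<delta> by blast
    then show ?thesis
      using abs_sign_conj_diff[OF s, where A="(f_IbM ^^ t) X0" and B=X]
      by (simp add: funpow_f_IbM_sign_conj[OF s])
  qed
  with \<open>0 < \<delta>\<close> show "\<exists>\<delta>>0. \<forall>X0. (\<forall>i j. \<bar>X0 $ i $ j - sign_conj s X $ i $ j\<bar> < \<delta>) \<longrightarrow>
      (\<forall>t i j. \<bar>(f_IbM ^^ t) X0 $ i $ j - sign_conj s X $ i $ j\<bar> < \<epsilon>)"
    by blast
qed

lemma rank_1_Q_IbM_stable_fixed_point:
  fixes Xs :: "real^('n::{finite,linorder})^('n::{finite,linorder})"
  assumes "Xs \<in> Q_IbM" "rank Xs = 1"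
  shows "fixed_point f_IbM Xs \<and> locally_stable f_IbM Xs"
proof -
  obtain \<sigma> c where \<sigma>: "\<forall>i. \<bar>\<sigma> i\<bar> = 1" and c: "\<forall>j. 0 < c j"
    and Xs: "Xs = sign_conj \<sigma> (\<chi> i j. c j)"
    using rank_1_Q_IbM_obtain_sign_conj[OF assms] .
  show ?thesis
    unfolding fixed_point_def Xs f_IbM_sign_conj[OF \<sigma>] f_IbM_consensus[OF c]
    using locally_stable_sign_conj[OF \<sigma> consensus_locally_stable[OF c]] by simp
qed

lemma min_abs_entry_eq_Min_image: "min_abs_entry X = Min ((\<lambda>(i, j). \<bar>X$i$j\<bar>) ` UNIV)"
proof -
  have "{\<bar>X$i$j\<bar> | i j. True} = (\<lambda>(i, j). \<bar>X$i$j\<bar>) ` UNIV" by auto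
  then show ?thesis unfolding min_abs_entry_def by simp
qed

lemma min_abs_entry_le: "min_abs_entry X \<le> \<bar>X$i$j\<bar>"
  unfolding min_abs_entry_eq_Min_image by (rule Min_le) auto

lemma min_abs_entry_ge: "(\<And>i j. r \<le> \<bar>X$i$j\<bar>) \<Longrightarrow> r \<le> min_abs_entry X"
  unfolding min_abs_entry_eq_Min_image by (simp add: Min_ge_iff)

lemma Liminf_ereal_pos_if_eventually_ge:
  fixes f :: "nat \<Rightarrow> real"
  assumes "0 < m" "\<forall>\<^sub>F t in sequentially. m \<le> f t"
  shows "0 < Liminf sequentially (\<lambda>t. ereal (f t))"
proof -
  have "ereal m \<le> Liminf sequentially (\<lambda>t. ereal (f t))"
    using assms(2) by (intro Liminf_bounded) simp
  moreover have "0 < ereal m"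
    using assms(1) by simp
  ultimately show ?thesis
    by (rule order_less_le_trans[rotated])
qed

lemma Liminf_ereal_pos_obtain:
  fixes f :: "nat \<Rightarrow> real"
  assumes "0 < Liminf sequentially (\<lambda>t. ereal (f t))"
  obtains r T where "0 < r" "\<And>t. T \<le> t \<Longrightarrow> r < f t"
proof -
  obtain r where r: "0 < ereal r" "ereal r < Liminf sequentially (\<lambda>t. ereal (f t))"
    using ereal_dense2[OF assms] by blast
  have "\<forall>\<^sub>F t in sequentially. ereal r < ereal (f t)"
    by (rule less_LiminfD[OF r(2)])
  then show ?thesis
    using that r(1) unfolding eventually_sequentially by auto
qed

lemma traj_obtain_sign_conj_positive:
  assumes "social_balance (traj X0 t0)"
  obtains s Y where "\<forall>i. \<bar>s i\<bar> = 1" "positive_matrix Y"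
    "\<And>k. traj X0 (t0 + k) = sign_conj s ((f_IbM ^^ k) Y)"
proof -
  obtain s where s: "\<forall>i. \<bar>s i\<bar> = 1" "positive_matrix (sign_conj s (traj X0 t0))"
    using social_balance_obtain_sign_conj[OF assms] .
  have "traj X0 (t0 + k) = sign_conj s ((f_IbM ^^ k) (sign_conj s (traj X0 t0)))" for k
    unfolding traj_add funpow_f_IbM_sign_conj[OF s(1)] sign_conj_sign_conj[OF s(1)] ..
  then show ?thesis
    using that s by blast
qed

lemma balanced_traj_Liminf_min_abs_entry_pos:
  assumes "social_balance (traj X0 t0)"
  shows "0 < Liminf sequentially (\<lambda>t. ereal (min_abs_entry (traj X0 t)))"
proof -
  obtain s Y where s: "\<forall>i. \<bar>s i\<bar> = 1" and Y: "positive_matrix Y"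
    and traj: "\<And>k. traj X0 (t0 + k) = sign_conj s ((f_IbM ^^ k) Y)"
    using traj_obtain_sign_conj_positive[OF assms] by blast
  define m where "m = Min (range (col_min Y))"
  have "0 < m"
    unfolding m_def using positive_matrix_col_min[OF Y] by (subst Min_gr_iff) auto
  moreover have "m \<le> min_abs_entry (traj X0 t)" if "t0 \<le> t" for t
  proof (rule min_abs_entry_ge)
    fix i j
    have "m \<le> col_min Y j"
      unfolding m_def by (rule Min_le) auto
    also have "\<dots> \<le> (f_IbM ^^ (t - t0)) Y $ i $ j"
      using funpow_f_IbM_col_min_max[OF Y] by blast
    finally show "m \<le> \<bar>traj X0 t $ i $ j\<bar>"
      using traj[of "t - t0"] that abs_sign_conj_nth[OF s] by simp
  qed
  ultimately show ?thesis
    by (intro Liminf_ereal_pos_if_eventually_ge) (auto simp: eventually_sequentially)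
qed

lemma tendsto_sign_conj:
  "(F \<longlongrightarrow> X) G \<Longrightarrow> ((\<lambda>t. sign_conj s (F t)) \<longlongrightarrow> sign_conj s X) G"
  by (intro vec_tendstoI) (simp add: tendsto_mult_left tendsto_vec_nth)

lemma balanced_traj_tendsto_rank_1_Q_IbM:
  fixes X0 :: "real^('n::{finite,linorder})^('n::{finite,linorder})"
  assumes "social_balance (traj X0 t0)"
  shows "\<exists>Xs\<in>Q_IbM. rank Xs = 1 \<and> traj X0 \<longlonglongrightarrow> Xs"
proof -
  obtain s Y where s: "\<forall>i. \<bar>s i\<bar> = 1" and Y: "positive_matrix Y"
    and traj: "\<And>k. traj X0 (t0 + k) = sign_conj s ((f_IbM ^^ k) Y)"
    using traj_obtain_sign_conj_positive[OF assms] by blast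
  obtain c where c: "\<forall>j. 0 < c j" and lim: "(\<lambda>k. (f_IbM ^^ k) Y) \<longlonglongrightarrow> (\<chi> i j. c j)"
    using positive_consensus[OF Y] .
  have "(\<lambda>k. traj X0 (k + t0)) = (\<lambda>k. sign_conj s ((f_IbM ^^ k) Y))"
    using traj by (simp add: add.commute)
  then have "(\<lambda>k. traj X0 (k + t0)) \<longlonglongrightarrow> sign_conj s (\<chi> i j. c j)"
    using tendsto_sign_conj[OF lim, of s] by simp
  then have "traj X0 \<longlonglongrightarrow> sign_conj s (\<chi> i j. c j)"
    by (rule LIMSEQ_offset)
  then show ?thesis
    using sign_conj_consensus_in_Q_IbM[OF s c] by blast
qed

lemma eventually_sgn_eq_if_tendsto:
  fixes X :: "real^'n^'m"
  assumes "(F \<longlongrightarrow> X) G" "\<forall>i j. X$i$j \<noteq> 0"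
  shows "\<forall>\<^sub>F t in G. \<forall>i j. sgn (F t $ i $ j) = sgn (X$i$j)"
proof -
  have "\<forall>\<^sub>F t in G. sgn (F t $ i $ j) = sgn (X$i$j)" for i j
  proof -
    have lim: "((\<lambda>t. F t $ i $ j) \<longlongrightarrow> X$i$j) G"
      using assms(1) by (intro tendsto_vec_nth)
    consider "0 < X$i$j" | "X$i$j < 0"
      using assms(2) by fastforce
    then show ?thesis
    proof cases
      case 1
      from order_tendstoD(1)[OF lim 1] show ?thesis
        by (rule eventually_mono) (use 1 in simp)
    next
      case 2
      from order_tendstoD(2)[OF lim 2] show ?thesis
        by (rule eventually_mono) (use 2 in simp)
    qed
  qed
  then show ?thesis
    by (intro eventually_all_finite)
qed

lemma tendsto_rank_1_Q_IbM_eventually_balanced: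
  fixes Xs :: "real^('n::{finite,linorder})^('n::{finite,linorder})"
  assumes "Xs \<in> Q_IbM" "rank Xs = 1" "traj X0 \<longlonglongrightarrow> Xs"
  shows "\<exists>t0. \<forall>t\<ge>t0. social_balance (traj X0 t)"
proof -
  obtain \<sigma> c where \<sigma>: "\<forall>i. \<bar>\<sigma> i\<bar> = 1" and c: "\<forall>j. 0 < c j"
    and Xs: "Xs = sign_conj \<sigma> (\<chi> i j. c j)"
    using rank_1_Q_IbM_obtain_sign_conj[OF assms(1,2)] .
  have "positive_matrix (\<chi> i j. c j)"
    using c unfolding positive_matrix_def by simp
  then have "social_balance Xs"
    unfolding Xs by (rule social_balance_sign_conj_positive[OF \<sigma>])
  moreover have "\<forall>i j. Xs$i$j \<noteq> 0"
    using \<sigma> c unfolding Xs by (metis abs_0 less_irrefl mult_eq_0_iff sign_conj_nth vec_lambda_beta zero_neq_one)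
  then have "\<forall>\<^sub>F t in sequentially. \<forall>i j. sgn (traj X0 t $ i $ j) = sgn (Xs$i$j)"
    by (rule eventually_sgn_eq_if_tendsto[OF assms(3)])
  ultimately show ?thesis
    unfolding eventually_sequentially by (metis social_balance_if_sgn_eq)
qed

subsection \<open>A Lyapunov function on the rs-symmetric matrices\<close>

lemma S_rs_symm_diag_pos: "X \<in> S_rs_symm \<Longrightarrow> 0 < X$i$i"
  unfolding S_rs_symm_def by blast

lemma S_rs_symm_sgn_sym: "X \<in> S_rs_symm \<Longrightarrow> sgn (X$i$j) = sgn (X$j$i)"
  unfolding S_rs_symm_def by blast

lemma S_rs_symm_row_abs_sum_pos: "X \<in> S_rs_symm \<Longrightarrow> 0 < row_abs_sum X i"
  using abs_le_row_abs_sum[of X i i] S_rs_symm_diag_pos[of X i] by linarith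

text \<open>The new weights are \<gamma>'(i) = \<gamma>(i) r(i) with r(i) the i-th absolute row sum: then
  \<gamma>'(i) f(X)(i,j) = \<Sum>k. \<gamma>(k) X(k,i) X(k,j) is symmetric in i and j.\<close>

lemma f_IbM_S_rs_symm:
  assumes X: "X \<in> S_rs_symm"
  shows "f_IbM X \<in> S_rs_symm"
proof -
  obtain \<gamma> :: "real^'a" where \<gamma>: "\<forall>i. 0 < \<gamma>$i" "\<forall>i j. \<gamma>$i * X$i$j = \<gamma>$j * X$j$i"
    using X unfolding S_rs_symm_def by blast
  have r: "0 < row_abs_sum X i" for i
    by (rule S_rs_symm_row_abs_sum_pos[OF X])
  define \<gamma>' :: "real^'a" where "\<gamma>' = (\<chi> i. \<gamma>$i * row_abs_sum X i)"
  have \<gamma>'_pos: "0 < \<gamma>'$i" for i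
    unfolding \<gamma>'_def using \<gamma>(1) r by simp
  have weighted: "\<gamma>'$i * f_IbM X$i$j = (\<Sum>k\<in>UNIV. \<gamma>$k * X$k$i * X$k$j)" for i j
  proof -
    have "\<gamma>'$i * f_IbM X$i$j = \<gamma>$i * (\<Sum>k\<in>UNIV. X$i$k * X$k$j)"
      unfolding \<gamma>'_def f_IbM_nth using r[of i] by simp
    also have "\<dots> = (\<Sum>k\<in>UNIV. (\<gamma>$i * X$i$k) * X$k$j)"
      by (simp add: sum_distrib_left mult.assoc)
    also have "\<dots> = (\<Sum>k\<in>UNIV. \<gamma>$k * X$k$i * X$k$j)"
      using \<gamma>(2) by simp
    finally show ?thesis .
  qed
  then have sym: "\<gamma>'$i * f_IbM X$i$j = \<gamma>'$j * f_IbM X$j$i" for i j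
    by (simp add: algebra_simps)
  have "sgn (f_IbM X$i$j) = sgn (f_IbM X$j$i)" for i j
    using arg_cong[OF sym[of i j], of sgn] \<gamma>'_pos[of i] \<gamma>'_pos[of j] by (simp add: sgn_mult)
  moreover have "0 < f_IbM X $ i $ i" for i
  proof -
    have "0 \<le> \<gamma>$k * X$k$i * X$k$i" for k
      using \<gamma>(1) by (simp add: mult.assoc less_imp_le)
    moreover have "0 < \<gamma>$i * X$i$i * X$i$i"
      using \<gamma>(1) S_rs_symm_diag_pos[OF X, of i] by simp
    ultimately have "0 < \<gamma>'$i * f_IbM X$i$i"
      unfolding weighted by (intro sum_pos2[of _ i]) auto
    then show ?thesis
      using \<gamma>'_pos[of i] by (simp add: zero_less_mult_iff)
  qed
  ultimately show ?thesis
    unfolding S_rs_symm_def using \<gamma>'_pos sym by blast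
qed

lemma traj_S_rs_symm: "X0 \<in> S_rs_symm \<Longrightarrow> traj X0 t \<in> S_rs_symm"
  by (induction t) (auto simp: traj_def intro: f_IbM_S_rs_symm)

definition col_abs_max :: "real^'n^'m \<Rightarrow> 'n \<Rightarrow> real" where
  "col_abs_max X j = Max (range (\<lambda>i. \<bar>X$i$j\<bar>))"

definition col_abs_max_sum :: "real^'n^'m \<Rightarrow> real" where
  "col_abs_max_sum X = (\<Sum>j\<in>UNIV. col_abs_max X j)"

lemma abs_le_col_abs_max: "\<bar>X$i$j\<bar> \<le> col_abs_max X j"
  unfolding col_abs_max_def by (rule Max_ge) auto

lemma col_abs_max_least: "(\<And>i. \<bar>X$i$j\<bar> \<le> a) \<Longrightarrow> col_abs_max X j \<le> a"
  unfolding col_abs_max_def by (simp add: Max_le_iff)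

lemma col_abs_max_nonneg: "0 \<le> col_abs_max X j"
  using abs_le_col_abs_max[of X undefined j] by linarith

lemma col_abs_max_sum_nonneg: "0 \<le> col_abs_max_sum X"
  unfolding col_abs_max_sum_def by (intro sum_nonneg) (simp add: col_abs_max_nonneg)

lemma row_abs_sum_le_col_abs_max_sum: "row_abs_sum X i \<le> col_abs_max_sum X"
  unfolding row_abs_sum_def col_abs_max_sum_def by (intro sum_mono abs_le_col_abs_max)

lemma col_abs_max_le_col_abs_max_sum: "col_abs_max X j \<le> col_abs_max_sum X"
  unfolding col_abs_max_sum_def by (rule member_le_sum) (auto simp: col_abs_max_nonneg)

lemma weighted_abs_le_col_abs_max:
  assumes "0 < row_abs_sum X i"
  shows "(\<Sum>k\<in>UNIV. (\<bar>X$i$k\<bar> / row_abs_sum X i) * \<bar>X$k$j\<bar>) \<le> col_abs_max X j"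
  using assms abs_row_weights_sum[OF assms]
  by (intro convex_comb_le) (auto simp: abs_le_col_abs_max)

lemma col_abs_max_f_IbM_le_gap:
  assumes rows: "\<forall>r. 0 < row_abs_sum X r"
    and col: "\<forall>l. \<bar>X$l$k\<bar> \<le> h" "\<bar>X$i$k\<bar> \<le> h - \<eta>" "0 \<le> \<eta>"
    and e: "\<forall>r. e \<le> \<bar>X$r$i\<bar> / row_abs_sum X r"
  shows "col_abs_max (f_IbM X) k \<le> h - e * \<eta>"
proof (rule col_abs_max_least)
  fix r
  have "(\<Sum>l\<in>UNIV. (\<bar>X$r$l\<bar> / row_abs_sum X r) * \<bar>X$l$k\<bar>) \<le> h - e * \<eta>"
    using rows[rule_format, of r] abs_row_weights_sum[of X r] col e
    by (intro convex_comb_le_gap[where i=i]) auto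
  then show "\<bar>f_IbM X $ r $ k\<bar> \<le> h - e * \<eta>"
    using abs_f_IbM_le_weighted[of X r k] rows by simp
qed

lemma col_abs_max_f_IbM_le:
  assumes "\<forall>r. 0 < row_abs_sum X r"
  shows "col_abs_max (f_IbM X) j \<le> col_abs_max X j"
  using col_abs_max_f_IbM_le_gap[OF assms, of j "col_abs_max X j" j 0 0] assms
  by (simp add: abs_le_col_abs_max less_imp_le)

lemma col_abs_max_sum_f_IbM_le:
  assumes "\<forall>r. 0 < row_abs_sum X r"
  shows "col_abs_max_sum (f_IbM X) \<le> col_abs_max_sum X"
  unfolding col_abs_max_sum_def by (intro sum_mono col_abs_max_f_IbM_le[OF assms])

lemma abs_sum_le_sum_abs_opposite_signs:
  fixes g :: "'a \<Rightarrow> real"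
  assumes "finite A" "i \<in> A" "j \<in> A" "i \<noteq> j" "g i * g j < 0"
  shows "\<bar>sum g A\<bar> \<le> (\<Sum>l\<in>A. \<bar>g l\<bar>) - 2 * min \<bar>g i\<bar> \<bar>g j\<bar>"
proof -
  define C where "C = A - {i} - {j}"
  have j: "j \<in> A - {i}"
    using assms(3,4) by simp
  have "sum h A = h i + h j + sum h C" for h :: "'a \<Rightarrow> real"
    using sum.remove[OF assms(1,2), of h] sum.remove[OF _ j, of h] assms(1) unfolding C_def by simp
  then have "sum g A = g i + g j + sum g C" and "(\<Sum>l\<in>A. \<bar>g l\<bar>) = \<bar>g i\<bar> + \<bar>g j\<bar> + (\<Sum>l\<in>C. \<bar>g l\<bar>)"
    by blast+
  moreover have "\<bar>g i + g j\<bar> \<le> \<bar>g i\<bar> + \<bar>g j\<bar> - 2 * min \<bar>g i\<bar> \<bar>g j\<bar>"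
    using assms(5) by (auto simp: mult_less_0_iff min_def abs_if)
  moreover have "\<bar>sum g C\<bar> \<le> (\<Sum>l\<in>C. \<bar>g l\<bar>)"
    by (rule sum_abs)
  ultimately show ?thesis
    by (smt (verit))
qed

lemma mult3_neg_if_sgn_prod_ne_1:
  fixes a b c :: real
  assumes "a \<noteq> 0" "b \<noteq> 0" "c \<noteq> 0" "sgn a * sgn b * sgn c \<noteq> 1"
  shows "a * b * c < 0"
  using assms by (auto simp: sgn_real_def mult_less_0_iff zero_less_mult_iff split: if_splits)

text \<open>An unbalanced triangle i, j, k makes the two terms X(i,i) X(i,k) and X(i,j) X(j,k) of
  f(X)(i,k) have opposite signs, so they partly cancel.\<close>

lemma unbalanced_abs_f_IbM_gap:
  assumes X: "X \<in> S_rs_symm" and m: "0 < m" "\<forall>a b. m \<le> \<bar>X$a$b\<bar>"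
    and unbalanced: "\<not> social_balance X"
  obtains i k where "\<bar>f_IbM X $ i $ k\<bar> \<le> col_abs_max X k - 2 * m * m / row_abs_sum X i"
proof -
  have nz: "X$a$b \<noteq> 0" for a b
    using m by (metis abs_zero not_le)
  obtain i j k where "sgn (X$i$j) * sgn (X$j$k) * sgn (X$k$i) \<noteq> 1"
    using unbalanced S_rs_symm_diag_pos[OF X] unfolding social_balance_def by blast
  then have "X$i$j * X$j$k * X$k$i < 0"
    using nz by (intro mult3_neg_if_sgn_prod_ne_1)
  then have neg: "X$i$j * X$j$k * X$i$k < 0"
    using S_rs_symm_sgn_sym[OF X, of i k] by (metis sgn_mult sgn_neg sgn_less)
  define g where "g l = X$i$l * X$l$k" for l
  have "g i * g j = X$i$i * (X$i$j * X$j$k * X$i$k)"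
    unfolding g_def by (simp add: algebra_simps)
  then have g_opp: "g i * g j < 0"
    using S_rs_symm_diag_pos[OF X, of i] neg by (simp add: mult_pos_neg)
  then have "j \<noteq> i"
    by (metis mult_less_0_iff order.asym)
  have "m * m \<le> min \<bar>g i\<bar> \<bar>g j\<bar>"
    unfolding g_def abs_mult using m by (auto intro: mult_mono)
  then have cancel: "\<bar>sum g UNIV\<bar> \<le> (\<Sum>l\<in>UNIV. \<bar>g l\<bar>) - 2 * m * m"
    using abs_sum_le_sum_abs_opposite_signs[OF finite UNIV_I UNIV_I \<open>j \<noteq> i\<close>[symmetric] g_opp]
    by (simp only: mult.assoc)
  have r: "0 < row_abs_sum X i"
    by (rule S_rs_symm_row_abs_sum_pos[OF X])
  have "\<bar>f_IbM X $ i $ k\<bar> = \<bar>sum g UNIV\<bar> / row_abs_sum X i"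
    unfolding f_IbM_nth abs_divide g_def using r by simp
  also have "\<dots> \<le> ((\<Sum>l\<in>UNIV. \<bar>g l\<bar>) - 2 * m * m) / row_abs_sum X i"
    using r cancel by (intro divide_right_mono) auto
  also have "\<dots> = (\<Sum>l\<in>UNIV. (\<bar>X$i$l\<bar> / row_abs_sum X i) * \<bar>X$l$k\<bar>) - 2 * m * m / row_abs_sum X i"
    unfolding diff_divide_distrib sum_divide_distrib g_def by (simp add: abs_mult)
  also have "\<dots> \<le> col_abs_max X k - 2 * m * m / row_abs_sum X i"
    using weighted_abs_le_col_abs_max[OF r] by simp
  finally show ?thesis
    by (rule that)
qed

text \<open>The cancellation lowers one entry of column k; one more step spreads this gap over the
  whole column, since every row puts weight at least m/B on the lowered entry.\<close>

lemma unbalanced_col_abs_max_sum_decrease: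
  assumes X: "X \<in> S_rs_symm" and m: "0 < m" "\<forall>a b. m \<le> \<bar>X$a$b\<bar>" "\<forall>a b. m \<le> \<bar>f_IbM X$a$b\<bar>"
    and unbalanced: "\<not> social_balance X" and B: "col_abs_max_sum X \<le> B"
  shows "col_abs_max_sum (f_IbM (f_IbM X)) \<le> col_abs_max_sum X - (m / B) * (2 * m * m / B)"
proof -
  define X' where "X' = f_IbM X"
  define \<eta> where "\<eta> = 2 * m * m / B"
  have rows: "\<forall>r. 0 < row_abs_sum X r" and rows': "\<forall>r. 0 < row_abs_sum X' r"
    using S_rs_symm_row_abs_sum_pos X f_IbM_S_rs_symm unfolding X'_def by blast+
  obtain i k where gap: "\<bar>X'$i$k\<bar> \<le> col_abs_max X k - 2 * m * m / row_abs_sum X i"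
    using unbalanced_abs_f_IbM_gap[OF X m(1,2) unbalanced] unfolding X'_def by blast
  have rB: "row_abs_sum X i \<le> B"
    using row_abs_sum_le_col_abs_max_sum[of X i] B by linarith
  then have "0 < B" "\<eta> \<le> 2 * m * m / row_abs_sum X i"
    using rows m(1) unfolding \<eta>_def by (auto intro: frac_le less_le_trans)
  then have "\<bar>X'$i$k\<bar> \<le> col_abs_max X k - \<eta>" "0 \<le> \<eta>"
    using gap m(1) unfolding \<eta>_def by auto
  moreover have "\<forall>l. \<bar>X'$l$k\<bar> \<le> col_abs_max X k"
    using abs_le_col_abs_max col_abs_max_f_IbM_le[OF rows] unfolding X'_def by (blast intro: order_trans)
  moreover have "\<forall>r. m / B \<le> \<bar>X'$r$i\<bar> / row_abs_sum X' r"
  proof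
    fix r
    have "row_abs_sum X' r \<le> B"
      using row_abs_sum_le_col_abs_max_sum[of X' r] col_abs_max_sum_f_IbM_le[OF rows] B
      unfolding X'_def by linarith
    then show "m / B \<le> \<bar>X'$r$i\<bar> / row_abs_sum X' r"
      using m rows' unfolding X'_def by (intro frac_le) auto
  qed
  ultimately have col_k: "col_abs_max (f_IbM X') k \<le> col_abs_max X k - (m / B) * \<eta>"
    by (intro col_abs_max_f_IbM_le_gap[OF rows']) blast+
  have "col_abs_max (f_IbM X') j \<le> col_abs_max X j - (if j = k then (m / B) * \<eta> else 0)" for j
    using col_k col_abs_max_f_IbM_le[OF rows', of j] col_abs_max_f_IbM_le[OF rows, of j]
    unfolding X'_def by auto
  then have "col_abs_max_sum (f_IbM X') \<le> (\<Sum>j\<in>UNIV. col_abs_max X j - (if j = k then (m / B) * \<eta> else 0))"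
    unfolding col_abs_max_sum_def by (intro sum_mono)
  then show ?thesis
    unfolding col_abs_max_sum_def sum_subtractf X'_def \<eta>_def by simp
qed

lemma traj_social_balance_mono:
  assumes "social_balance (traj X0 t)" "t \<le> t'"
  shows "social_balance (traj X0 t')"
proof -
  have "social_balance (traj X0 (t + k))" for k
    by (induction k) (use assms(1) in \<open>simp_all add: traj_Suc social_balance_f_IbM\<close>)
  then show ?thesis
    using assms(2) le_Suc_ex by blast
qed

lemma col_abs_max_sum_traj_antimono:
  assumes "X0 \<in> S_rs_symm" "t \<le> t'"
  shows "col_abs_max_sum (traj X0 t') \<le> col_abs_max_sum (traj X0 t)"
proof -
  have "col_abs_max_sum (traj X0 (t + k)) \<le> col_abs_max_sum (traj X0 t)" for k
  proof (induction k)
    case (Suc k)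
    then show ?case
      using col_abs_max_sum_f_IbM_le[of "traj X0 (t + k)"]
        S_rs_symm_row_abs_sum_pos[OF traj_S_rs_symm[OF assms(1)]]
      by (simp add: traj_Suc)
  qed simp
  then show ?thesis
    using assms(2) le_Suc_ex by blast
qed

text \<open>Once all entries stay above r > 0, the Lyapunov function drops by a fixed amount every
  two steps as long as the trajectory is unbalanced; it is nonnegative, so this cannot go on.\<close>

lemma nonvanishing_traj_eventually_balanced:
  assumes X0: "X0 \<in> S_rs_symm"
    and L: "0 < Liminf sequentially (\<lambda>t. ereal (min_abs_entry (traj X0 t)))"
  shows "\<exists>t0. \<forall>t\<ge>t0. social_balance (traj X0 t)"
proof (rule ccontr)
  assume never: "\<nexists>t0. \<forall>t\<ge>t0. social_balance (traj X0 t)"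
  obtain r T where r: "0 < r" and T: "\<And>t. T \<le> t \<Longrightarrow> r < min_abs_entry (traj X0 t)"
    using Liminf_ereal_pos_obtain[OF L] by blast
  have entries: "\<forall>a b. r \<le> \<bar>traj X0 t $ a $ b\<bar>" if "T \<le> t" for t
    using T[OF that] min_abs_entry_le[of "traj X0 t"] by (meson less_imp_le order_trans)
  have unbalanced: "\<not> social_balance (traj X0 t)" for t
    using never traj_social_balance_mono by blast
  define B where "B = col_abs_max_sum (traj X0 T)"
  have le_B: "col_abs_max_sum (traj X0 (T + k)) \<le> B" for k
    unfolding B_def by (rule col_abs_max_sum_traj_antimono[OF X0]) simp
  define \<delta> where "\<delta> = (r / B) * (2 * r * r / B)"
  have "r \<le> B"
    using entries[of T] abs_le_col_abs_max[of "traj X0 T"] col_abs_max_le_col_abs_max_sum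
    unfolding B_def by (meson order.refl order_trans)
  then have "0 < \<delta>"
    unfolding \<delta>_def using r by simp
  have decrease: "col_abs_max_sum (traj X0 (T + 2 * k)) \<le> B - real k * \<delta>" for k
  proof (induction k)
    case (Suc k)
    have "col_abs_max_sum (f_IbM (f_IbM (traj X0 (T + 2 * k))))
        \<le> col_abs_max_sum (traj X0 (T + 2 * k)) - \<delta>"
      unfolding \<delta>_def using entries[of "T + 2 * k"] entries[of "Suc (T + 2 * k)"] le_B[of "2 * k"]
      by (intro unbalanced_col_abs_max_sum_decrease[OF traj_S_rs_symm[OF X0] r _ _ unbalanced])
        (auto simp: traj_Suc)
    then show ?case
      using Suc by (simp add: traj_Suc algebra_simps)
  qed (simp add: B_def)
  obtain k :: nat where "B / \<delta> < real k"
    using reals_Archimedean2 by blast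
  then have "B - real k * \<delta> < 0"
    using \<open>0 < \<delta>\<close> by (simp add: divide_less_eq)
  then show False
    using decrease[of k] col_abs_max_sum_nonneg[of "traj X0 (T + 2 * k)"] by linarith
qed

theorem theorem4p6:
  shows "(\<forall>Xs \<in> (Q_IbM :: (real^('n::{finite,linorder})^('n::{finite,linorder})) set). rank Xs = 1 \<longrightarrow>
            fixed_point f_IbM Xs \<and> locally_stable f_IbM Xs)
       \<and> (\<forall>X0 \<in> (S_rs_symm :: (real^('n::{finite,linorder})^('n::{finite,linorder})) set).
            ((Liminf sequentially (\<lambda>t. ereal (min_abs_entry (traj X0 t))) > 0)
              \<longleftrightarrow> (\<exists>t0. \<forall>t\<ge>t0. social_balance (traj X0 t)))
          \<and> ((\<exists>t0. \<forall>t\<ge>t0. social_balance (traj X0 t))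
              \<longleftrightarrow> (\<exists>Xs \<in> Q_IbM. rank Xs = 1 \<and> traj X0 \<longlonglongrightarrow> Xs)))"
proof (intro conjI ballI)
  fix X0 :: "real^('n::{finite,linorder})^('n::{finite,linorder})"
  assume X0: "X0 \<in> S_rs_symm"
  show "0 < Liminf sequentially (\<lambda>t. ereal (min_abs_entry (traj X0 t)))
      \<longleftrightarrow> (\<exists>t0. \<forall>t\<ge>t0. social_balance (traj X0 t))"
    using nonvanishing_traj_eventually_balanced[OF X0] balanced_traj_Liminf_min_abs_entry_pos
    by blast
  show "(\<exists>t0. \<forall>t\<ge>t0. social_balance (traj X0 t))
      \<longleftrightarrow> (\<exists>Xs\<in>Q_IbM. rank Xs = 1 \<and> traj X0 \<longlonglongrightarrow> Xs)"
    using balanced_traj_tendsto_rank_1_Q_IbM tendsto_rank_1_Q_IbM_eventually_balanced by blast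
qed (use rank_1_Q_IbM_stable_fixed_point in blast)

end
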